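(* Let $k$ be a field of characteristic $p>0$, let $R$ be a smooth $k$-algebra, let $e\in\mathbb N_{>0}$ and $m\in\mathbb N_{>0}$, and let $\mathbb D=(D_{\mathbf i})_{\mathbf i\in[p^m]^e}$ be an $m$-truncated $e$-dimensional HS-derivation on $R$ over $k$. Then there exists an $e$-dimensional HS-derivation $\mathbb D'=(D'_{\mathbf i})_{\mathbf i\in\mathbb N^e}$ on $R$ over $k$ such that $D'_{\mathbf i}=D_{\mathbf i}$ for every $\mathbf i\in[p^m]^e$.
   Context: All rings are commutative with $1$. For $m\in\mathbb N_{>0}\cup\{\infty\}$ and a $k$-algebra $R$ put $R[\bar v]:=R[X_1,\dots,X_e]/(X_1^{p^m},\dots,X_e^{p^m})$, with $v_i$ the image of $X_i$ (for $m=\infty$, $R[\bar v]:=R[[X_1,\dots,X_e]]$ and $v_i=X_i$). Let $[p^m]=\{0,1,\dots,p^m-1\}$ (and $[p^\infty]=\mathbb N$); for $\mathbf i=(i_1,\dots,i_e)$ write $\bar v^{\mathbf i}=v_1^{i_1}\cdots v_e^{i_e}$. An $m$-truncated $e$-dimensional HS-derivation on $R$ over $k$ is a family $\mathbb D=(D_{\mathbf i}:R\to R)_{\mathbf i\in[p^m]^e}$ such that the map $R\to R[\bar v]$, $r\mapsto\sum_{\mathbf i}D_{\mathbf i}(r)\bar v^{\mathbf i}$, is a $k$-algebra homomorphism and $D_{\mathbf 0}=\mathrm{id}_R$. For $m=\infty$ this is called an $e$-dimensional HS-derivation. *)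

theory Defs
  imports "HOL-Algebra.Ring" "HOL-Algebra.Ideal"
begin

text \<open>The base field k is a type 'k of class field; the k-algebra R is a
type 'r of class comm_ring_1 together with its structure map phi :: 'k => 'r, a ring
homomorphism.  Multi-indices in N^e are lists of naturals of length e.\<close>

definition is_ring_hom_fun :: "('a::comm_ring_1 \<Rightarrow> 'b::comm_ring_1) \<Rightarrow> bool" where
  "is_ring_hom_fun f \<longleftrightarrow> f 1 = 1 \<and> (\<forall>x y. f (x + y) = f x + f y) \<and> (\<forall>x y. f (x * y) = f x * f y)"

inductive_set alg_gen :: "('k::field \<Rightarrow> 'r::comm_ring_1) \<Rightarrow> 'r set \<Rightarrow> 'r set"
  for phi :: "'k \<Rightarrow> 'r" and G :: "'r set" where
  scal: "phi c \<in> alg_gen phi G"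
| gen: "x \<in> G \<Longrightarrow> x \<in> alg_gen phi G"
| add: "x \<in> alg_gen phi G \<Longrightarrow> y \<in> alg_gen phi G \<Longrightarrow> x + y \<in> alg_gen phi G"
| mult: "x \<in> alg_gen phi G \<Longrightarrow> y \<in> alg_gen phi G \<Longrightarrow> x * y \<in> alg_gen phi G"

definition finite_type :: "('k::field \<Rightarrow> 'r::comm_ring_1) \<Rightarrow> bool" where
  "finite_type phi \<longleftrightarrow> (\<exists>G. finite G \<and> alg_gen phi G = UNIV)"

text \<open>Formal smoothness (infinitesimal lifting property): for every k-algebra A, every
square-zero ideal I of A, every k-algebra homomorphism R -> A/I lifts to a k-algebra
homomorphism R -> A.  A map R -> A/I is represented by a set-theoretic lift f : R -> A
that is a k-algebra homomorphism modulo I.  The test algebras A range over (HOL-Algebra)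
commutative rings whose carrier lies in the type nat list => 'r; this type has cardinality
at least max(|R|,|k|,aleph_0), which suffices.\<close>
definition formally_smooth :: "('k::field \<Rightarrow> 'r::comm_ring_1) \<Rightarrow> bool" where
  "formally_smooth phi \<longleftrightarrow>
    (\<forall>(A :: (nat list \<Rightarrow> 'r) ring) (psi :: 'k \<Rightarrow> nat list \<Rightarrow> 'r) (I :: (nat list \<Rightarrow> 'r) set)
        (f :: 'r \<Rightarrow> nat list \<Rightarrow> 'r).
      cring A \<and>
      (\<forall>c. psi c \<in> carrier A) \<and> psi 1 = \<one>\<^bsub>A\<^esub> \<and>
      (\<forall>c d. psi (c + d) = psi c \<oplus>\<^bsub>A\<^esub> psi d) \<and> (\<forall>c d. psi (c * d) = psi c \<otimes>\<^bsub>A\<^esub> psi d) \<and>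
      ideal I A \<and> (\<forall>x\<in>I. \<forall>y\<in>I. x \<otimes>\<^bsub>A\<^esub> y = \<zero>\<^bsub>A\<^esub>) \<and>
      (\<forall>r. f r \<in> carrier A) \<and>
      f 1 \<ominus>\<^bsub>A\<^esub> \<one>\<^bsub>A\<^esub> \<in> I \<and>
      (\<forall>r s. f (r + s) \<ominus>\<^bsub>A\<^esub> (f r \<oplus>\<^bsub>A\<^esub> f s) \<in> I) \<and>
      (\<forall>r s. f (r * s) \<ominus>\<^bsub>A\<^esub> (f r \<otimes>\<^bsub>A\<^esub> f s) \<in> I) \<and>
      (\<forall>c. f (phi c) \<ominus>\<^bsub>A\<^esub> psi c \<in> I)
      \<longrightarrow>
      (\<exists>g :: 'r \<Rightarrow> nat list \<Rightarrow> 'r.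
         (\<forall>r. g r \<in> carrier A) \<and> g 1 = \<one>\<^bsub>A\<^esub> \<and>
         (\<forall>r s. g (r + s) = g r \<oplus>\<^bsub>A\<^esub> g s) \<and>
         (\<forall>r s. g (r * s) = g r \<otimes>\<^bsub>A\<^esub> g s) \<and>
         (\<forall>c. g (phi c) = psi c) \<and>
         (\<forall>r. g r \<ominus>\<^bsub>A\<^esub> f r \<in> I)))"

text \<open>Smooth = of finite type (equivalently, over a field, of finite presentation) and
formally smooth.\<close>
definition smooth_algebra :: "('k::field \<Rightarrow> 'r::comm_ring_1) \<Rightarrow> bool" where
  "smooth_algebra phi \<longleftrightarrow> is_ring_hom_fun phi \<and> finite_type phi \<and> formally_smooth phi"

definition trunc_idx :: "nat \<Rightarrow> nat \<Rightarrow> nat list set" where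
  "trunc_idx e n = {i. length i = e \<and> (\<forall>t<e. i ! t < n)}"

definition full_idx :: "nat \<Rightarrow> nat list set" where
  "full_idx e = {i. length i = e}"

text \<open>A family D indexed by the downward-closed set Idx of multi-indices of length e
(Idx = [p^m]^e or N^e) is an HS-derivation over k iff r |-> sum_i D_i(r) v^i is a
k-algebra homomorphism R -> R[v] with D_0 = id.  Written componentwise: each D_i is
additive, commutes with the k-structure on coefficients (D_i(phi c * r) = phi c * D_i r),
satisfies D_i(1) = 0 for i <> 0 (unitality), and the Leibniz rule
D_i(rs) = sum_{j+l=i} D_j(r) D_l(s) (multiplicativity in the truncated/full power series
ring; the truncation never interferes because Idx is downward closed).\<close>
definition HS_deriv :: "('k::field \<Rightarrow> 'r::comm_ring_1) \<Rightarrow> nat \<Rightarrow> nat list set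
    \<Rightarrow> (nat list \<Rightarrow> 'r \<Rightarrow> 'r) \<Rightarrow> bool" where
  "HS_deriv phi e Idx D \<longleftrightarrow>
    (\<forall>r. D (replicate e 0) r = r) \<and>
    (\<forall>i\<in>Idx. i \<noteq> replicate e 0 \<longrightarrow> D i 1 = 0) \<and>
    (\<forall>i\<in>Idx. \<forall>r s. D i (r + s) = D i r + D i s) \<and>
    (\<forall>i\<in>Idx. \<forall>c r. D i (phi c * r) = phi c * D i r) \<and>
    (\<forall>i\<in>Idx. \<forall>r s. D i (r * s) =
        (\<Sum>(j, l) \<in> {(j, l). length j = e \<and> length l = e \<and> map2 (+) j l = i}. D j r * D l s))"

end

theory Submission
  imports Defs
begin

text \<open>An HS-derivation on a downward closed index set S is the same thing as a k-algebra
homomorphism from R into the ring of power series truncated outside S.  If S' is obtained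
from S by adding indices whose pairwise sums leave S', the series vanishing on S form a
square-zero ideal of the S'-truncated ring, so formal smoothness lifts the homomorphism
given on S to S'.  Adding the multi-indices of total degree n + 1 is such a step, and the
compatible lifts for all n glue to an HS-derivation on all of N^e.  Neither the
characteristic nor the shape [p^m]^e of the given index set plays a role.\<close>

definition idx_splits :: "nat \<Rightarrow> nat list \<Rightarrow> (nat list \<times> nat list) set" where
  "idx_splits e i = {(j, l). length j = e \<and> length l = e \<and> map2 (+) j l = i}"

definition idx_conv :: "nat \<Rightarrow> (nat list \<Rightarrow> 'r::comm_ring_1) \<Rightarrow> (nat list \<Rightarrow> 'r) \<Rightarrow> nat list \<Rightarrow> 'r" where
  "idx_conv e f g i = (\<Sum>(j, l)\<in>idx_splits e i. f j * g l)"

definition series_const :: "nat \<Rightarrow> 'r::zero \<Rightarrow> nat list \<Rightarrow> 'r" where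
  "series_const e a = (\<lambda>i. if i = replicate e 0 then a else 0)"

lemma idx_splitsD:
  "(j, l) \<in> idx_splits e i \<Longrightarrow>
     length j = e \<and> length l = e \<and> length i = e \<and> (\<forall>t<e. i ! t = j ! t + l ! t)"
  unfolding idx_splits_def by auto

lemma idx_splitsI:
  "length j = e \<Longrightarrow> length l = e \<Longrightarrow> length i = e \<Longrightarrow> (\<forall>t<e. i ! t = j ! t + l ! t) \<Longrightarrow>
     (j, l) \<in> idx_splits e i"
  unfolding idx_splits_def by (auto intro!: nth_equalityI)

lemma idx_splits_map2: "(j, l) \<in> idx_splits e i \<Longrightarrow> map2 (+) j l = i"
  unfolding idx_splits_def by simp

lemma idx_splits_swap: "(j, l) \<in> idx_splits e i \<longleftrightarrow> (l, j) \<in> idx_splits e i"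
  by (auto dest!: idx_splitsD intro!: idx_splitsI)

lemma HS_derivD:
  assumes "HS_deriv phi e Idx D"
  shows "D (replicate e 0) r = r"
    and "i \<in> Idx \<Longrightarrow> i \<noteq> replicate e 0 \<Longrightarrow> D i 1 = 0"
    and "i \<in> Idx \<Longrightarrow> D i (r + s) = D i r + D i s"
    and "i \<in> Idx \<Longrightarrow> D i (phi c * r) = phi c * D i r"
    and "i \<in> Idx \<Longrightarrow> D i (r * s) = (\<Sum>(j, l)\<in>idx_splits e i. D j r * D l s)"
  using assms unfolding HS_deriv_def idx_splits_def by auto

lemma finite_idx_splits: "finite (idx_splits e i)"
proof -
  let ?L = "{xs. set xs \<subseteq> {..sum_list i} \<and> length xs = e}"
  have "x \<in> ?L \<times> ?L" if "x \<in> idx_splits e i" for x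
  proof -
    obtain j l where x: "x = (j, l)" by (cases x)
    then have d: "length j = e" "length l = e" "length i = e" "\<forall>t<e. i ! t = j ! t + l ! t"
      using idx_splitsD that by blast+
    then have "\<forall>t<e. i ! t \<le> sum_list i" using elem_le_sum_list by metis
    with d have "set j \<subseteq> {..sum_list i}" "set l \<subseteq> {..sum_list i}"
      by (auto simp: in_set_conv_nth) (metis le_add1 le_trans, metis le_add2 le_trans)
    with d x show ?thesis by simp
  qed
  moreover have "finite (?L \<times> ?L)" by (intro finite_cartesian_product finite_lists_length_eq) auto
  ultimately show ?thesis by (meson finite_subset subsetI)
qed

lemma sum_list_map2_plus:
  "length i = length j \<Longrightarrow> sum_list (map2 (+) i j) = sum_list i + sum_list (j :: nat list)"
proof (induction i arbitrary: j)
  case (Cons a i)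
  then show ?case by (cases j) auto
qed simp

lemma idx_conv_commute: "idx_conv e f g i = idx_conv e g f i"
proof -
  have "bij_betw (\<lambda>(j, l). (l, j)) (idx_splits e i) (idx_splits e i)"
    by (rule bij_betwI[where g="\<lambda>(j, l). (l, j)"]) (auto simp: idx_splits_swap)
  then show ?thesis
    unfolding idx_conv_def by (subst sum.reindex_bij_betw[symmetric]) (auto simp: split_def mult.commute)
qed

text \<open>Both iterated convolutions are sums over the triples (a, b, c) with a + b + c = i.\<close>
definition idx_splits3 :: "nat \<Rightarrow> nat list \<Rightarrow> (nat list \<times> nat list \<times> nat list) set" where
  "idx_splits3 e i = {(a, b, c). length a = e \<and> length b = e \<and> length c = e \<and> length i = e \<and>
     (\<forall>t<e. i ! t = a ! t + b ! t + c ! t)}"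

lemma idx_splits3_left:
  "(j, l) \<in> idx_splits e i \<Longrightarrow> (a, b) \<in> idx_splits e j \<Longrightarrow> (a, b, l) \<in> idx_splits3 e i"
  unfolding idx_splits3_def by (auto dest!: idx_splitsD)

lemma idx_splits3_leftD:
  "(a, b, c) \<in> idx_splits3 e i \<Longrightarrow>
     (map2 (+) a b, c) \<in> idx_splits e i \<and> (a, b) \<in> idx_splits e (map2 (+) a b)"
  unfolding idx_splits3_def by (auto intro!: idx_splitsI)

lemma idx_splits3_right:
  "(a, k) \<in> idx_splits e i \<Longrightarrow> (b, c) \<in> idx_splits e k \<Longrightarrow> (a, b, c) \<in> idx_splits3 e i"
  unfolding idx_splits3_def by (auto dest!: idx_splitsD simp: add.assoc)

lemma idx_splits3_rightD:
  "(a, b, c) \<in> idx_splits3 e i \<Longrightarrow>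
     (a, map2 (+) b c) \<in> idx_splits e i \<and> (b, c) \<in> idx_splits e (map2 (+) b c)"
  unfolding idx_splits3_def by (auto intro!: idx_splitsI simp: add.assoc)

lemma idx_conv_assoc_left:
  "idx_conv e (idx_conv e f g) h i = (\<Sum>(a, b, c)\<in>idx_splits3 e i. f a * g b * h c)"
proof -
  have "idx_conv e (idx_conv e f g) h i
      = (\<Sum>x\<in>Sigma (idx_splits e i) (\<lambda>(j, l). idx_splits e j). f (fst (snd x)) * g (snd (snd x)) * h (snd (fst x)))"
  proof -
    have "(\<Sum>x\<in>idx_splits e i. \<Sum>y\<in>idx_splits e (fst x). f (fst y) * g (snd y) * h (snd x))
        = (\<Sum>(x, y)\<in>Sigma (idx_splits e i) (\<lambda>x. idx_splits e (fst x)). f (fst y) * g (snd y) * h (snd x))"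
      by (rule sum.Sigma) (auto simp: finite_idx_splits)
    then show ?thesis by (simp add: idx_conv_def sum_distrib_right split_def)
  qed
  also have "\<dots> = (\<Sum>(a, b, c)\<in>idx_splits3 e i. f a * g b * h c)"
    by (rule sum.reindex_bij_witness[where i="\<lambda>(a, b, c). ((map2 (+) a b, c), (a, b))"
          and j="\<lambda>((j, l), (a, b)). (a, b, l)"])
      (auto split: prod.splits intro: idx_splits3_left idx_splits_map2 dest: idx_splits3_leftD)
  finally show ?thesis .
qed

lemma idx_conv_assoc_right:
  "idx_conv e f (idx_conv e g h) i = (\<Sum>(a, b, c)\<in>idx_splits3 e i. f a * g b * h c)"
proof -
  have "idx_conv e f (idx_conv e g h) i
      = (\<Sum>x\<in>Sigma (idx_splits e i) (\<lambda>(a, k). idx_splits e k). f (fst (fst x)) * g (fst (snd x)) * h (snd (snd x)))"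
  proof -
    have "(\<Sum>x\<in>idx_splits e i. \<Sum>y\<in>idx_splits e (snd x). f (fst x) * (g (fst y) * h (snd y)))
        = (\<Sum>(x, y)\<in>Sigma (idx_splits e i) (\<lambda>x. idx_splits e (snd x)). f (fst x) * (g (fst y) * h (snd y)))"
      by (rule sum.Sigma) (auto simp: finite_idx_splits)
    then show ?thesis by (simp add: idx_conv_def sum_distrib_left split_def mult.assoc)
  qed
  also have "\<dots> = (\<Sum>(a, b, c)\<in>idx_splits3 e i. f a * g b * h c)"
    by (rule sum.reindex_bij_witness[where i="\<lambda>(a, b, c). ((a, map2 (+) b c), (b, c))"
          and j="\<lambda>((a, k), (b, c)). (a, b, c)"])
      (auto split: prod.splits intro: idx_splits3_right idx_splits_map2 dest: idx_splits3_rightD)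
  finally show ?thesis .
qed

lemma idx_conv_assoc: "idx_conv e (idx_conv e f g) h i = idx_conv e f (idx_conv e g h) i"
  by (simp only: idx_conv_assoc_left idx_conv_assoc_right)

lemma idx_conv_add_left: "idx_conv e (\<lambda>j. f j + g j) h i = idx_conv e f h i + idx_conv e g h i"
  unfolding idx_conv_def by (simp add: split_def distrib_right sum.distrib)

lemma idx_conv_series_const:
  assumes "length i = e"
  shows "idx_conv e (series_const e a) g i = a * g i"
proof -
  have "idx_conv e (series_const e a) g i
      = (\<Sum>x\<in>idx_splits e i. if x = (replicate e 0, i) then a * g i else 0)"
    unfolding idx_conv_def series_const_def
  proof (intro sum.cong refl, clarify)
    fix j l assume "(j, l) \<in> idx_splits e i"
    then have "j = replicate e 0 \<Longrightarrow> l = i" by (auto dest!: idx_splitsD intro!: nth_equalityI)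
    then show "(if j = replicate e 0 then a else 0) * g l = (if (j, l) = (replicate e 0, i) then a * g i else 0)"
      by auto
  qed
  also have "\<dots> = a * g i"
    using assms by (simp add: finite_idx_splits idx_splitsI)
  finally show ?thesis .
qed

definition down_closed_idx :: "nat \<Rightarrow> nat list set \<Rightarrow> bool" where
  "down_closed_idx e S \<longleftrightarrow> S \<subseteq> full_idx e \<and> replicate e 0 \<in> S \<and>
     (\<forall>i\<in>S. \<forall>j. length j = e \<and> (\<forall>t<e. j ! t \<le> i ! t) \<longrightarrow> j \<in> S)"

lemma down_closed_idxD:
  "down_closed_idx e S \<Longrightarrow> replicate e 0 \<in> S"
  "down_closed_idx e S \<Longrightarrow> i \<in> S \<Longrightarrow> length i = e"
  unfolding down_closed_idx_def full_idx_def by auto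

lemma down_closed_idx_splits:
  "down_closed_idx e S \<Longrightarrow> i \<in> S \<Longrightarrow> (j, l) \<in> idx_splits e i \<Longrightarrow> j \<in> S \<and> l \<in> S"
  unfolding down_closed_idx_def by (drule idx_splitsD) (metis le_add1 le_add2)

lemma down_closed_trunc_idx: "n > 0 \<Longrightarrow> down_closed_idx e (trunc_idx e n)"
  unfolding down_closed_idx_def trunc_idx_def full_idx_def by (auto intro: le_less_trans)

lemma idx_conv_cong_down_closed:
  assumes "down_closed_idx e S" "i \<in> S" "\<And>j. j \<in> S \<Longrightarrow> f j = f' j" "\<And>j. j \<in> S \<Longrightarrow> g j = g' j"
  shows "idx_conv e f g i = idx_conv e f' g' i"
  unfolding idx_conv_def using assms by (intro sum.cong) (auto dest: down_closed_idx_splits)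

text \<open>The power series ring R[[v_1,...,v_e]] modulo the monomials with exponent outside S.\<close>
definition trunc_series_ring :: "nat \<Rightarrow> nat list set \<Rightarrow> (nat list \<Rightarrow> 'r::comm_ring_1) ring" where
  "trunc_series_ring e S =
    \<lparr>carrier = {f. \<forall>i. i \<notin> S \<longrightarrow> f i = 0},
     mult = (\<lambda>f g i. if i \<in> S then idx_conv e f g i else 0),
     one = series_const e 1, zero = (\<lambda>i. 0), add = (\<lambda>f g i. f i + g i)\<rparr>"

lemma trunc_series_ring_simps:
  "carrier (trunc_series_ring e S) = {f. \<forall>i. i \<notin> S \<longrightarrow> f i = 0}"
  "f \<otimes>\<^bsub>trunc_series_ring e S\<^esub> g = (\<lambda>i. if i \<in> S then idx_conv e f g i else 0)"
  "\<one>\<^bsub>trunc_series_ring e S\<^esub> = series_const e 1"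
  "\<zero>\<^bsub>trunc_series_ring e S\<^esub> = (\<lambda>i. 0)"
  "f \<oplus>\<^bsub>trunc_series_ring e S\<^esub> g = (\<lambda>i. f i + g i)"
  unfolding trunc_series_ring_def by simp_all

lemma cring_trunc_series_ring:
  assumes S: "down_closed_idx e S"
  shows "cring (trunc_series_ring e S :: (nat list \<Rightarrow> 'r::comm_ring_1) ring)"
proof -
  have "abelian_group (trunc_series_ring e S :: (nat list \<Rightarrow> 'r) ring)"
  proof (rule abelian_groupI, goal_cases)
    case (6 x)
    then show ?case by (intro bexI[where x="\<lambda>i. - x i"]) (auto simp: trunc_series_ring_simps)
  qed (auto simp: trunc_series_ring_simps add.assoc add.commute)
  moreover have "comm_monoid (trunc_series_ring e S :: (nat list \<Rightarrow> 'r) ring)"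
  proof (rule comm_monoidI, goal_cases)
    case 2
    then show ?case using S by (auto simp: trunc_series_ring_simps series_const_def down_closed_idx_def)
  next
    case (3 x y z)
    have "idx_conv e (\<lambda>j. if j \<in> S then idx_conv e x y j else 0) z i
        = idx_conv e x (\<lambda>j. if j \<in> S then idx_conv e y z j else 0) i" if "i \<in> S" for i
    proof -
      have "idx_conv e (\<lambda>j. if j \<in> S then idx_conv e x y j else 0) z i = idx_conv e (idx_conv e x y) z i"
        by (rule idx_conv_cong_down_closed[OF S that]) simp_all
      also have "\<dots> = idx_conv e x (idx_conv e y z) i"
        by (rule idx_conv_assoc)
      also have "\<dots> = idx_conv e x (\<lambda>j. if j \<in> S then idx_conv e y z j else 0) i"
        by (rule idx_conv_cong_down_closed[OF S that]) simp_all
      finally show ?thesis .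
    qed
    then show ?case by (auto simp: trunc_series_ring_simps)
  next
    case (4 x)
    then show ?case by (auto simp: trunc_series_ring_simps idx_conv_series_const down_closed_idxD(2)[OF S])
  qed (auto simp: trunc_series_ring_simps idx_conv_commute)
  ultimately show ?thesis
    by (rule cringI) (auto simp: trunc_series_ring_simps idx_conv_add_left)
qed

lemma trunc_series_ring_uminus:
  assumes "down_closed_idx e S"
    and "x \<in> carrier (trunc_series_ring e S :: (nat list \<Rightarrow> 'r::comm_ring_1) ring)"
  shows "\<ominus>\<^bsub>trunc_series_ring e S\<^esub> x = (\<lambda>i. - x i)"
proof -
  interpret cring "trunc_series_ring e S :: (nat list \<Rightarrow> 'r) ring"
    by (rule cring_trunc_series_ring[OF assms(1)])
  show ?thesis
    by (rule minus_equality) (use assms(2) in \<open>auto simp: trunc_series_ring_simps\<close>)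
qed

lemma trunc_series_ring_minus:
  assumes "down_closed_idx e S"
    and "x \<in> carrier (trunc_series_ring e S :: (nat list \<Rightarrow> 'r::comm_ring_1) ring)"
    and "y \<in> carrier (trunc_series_ring e S)"
  shows "x \<ominus>\<^bsub>trunc_series_ring e S\<^esub> y = (\<lambda>i. x i - y i)"
  using trunc_series_ring_uminus[OF assms(1,3)] by (simp add: a_minus_def trunc_series_ring_simps)

definition trunc_series_vanishing :: "nat \<Rightarrow> nat list set \<Rightarrow> nat list set \<Rightarrow> (nat list \<Rightarrow> 'r::comm_ring_1) set" where
  "trunc_series_vanishing e S' S = {x \<in> carrier (trunc_series_ring e S'). \<forall>i\<in>S. x i = 0}"

lemma ideal_trunc_series_vanishing:
  assumes S': "down_closed_idx e S'" and S: "down_closed_idx e S" and "S \<subseteq> S'"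
  shows "ideal (trunc_series_vanishing e S' S :: (nat list \<Rightarrow> 'r::comm_ring_1) set) (trunc_series_ring e S')"
proof -
  have conv_zero: "idx_conv e x y i = 0" if i: "i \<in> S" and y: "\<forall>i\<in>S. y i = 0"
    for x y :: "nat list \<Rightarrow> 'r" and i
    unfolding idx_conv_def
  proof (rule sum.neutral, clarify)
    fix j l assume "(j, l) \<in> idx_splits e i"
    with y down_closed_idx_splits[OF S i] show "x j * y l = 0" by simp
  qed
  show ?thesis
  proof (rule idealI)
    show "ring (trunc_series_ring e S' :: (nat list \<Rightarrow> 'r) ring)"
      using cring_trunc_series_ring[OF S'] cring.axioms(1) by blast
  next
    show "subgroup (trunc_series_vanishing e S' S :: (nat list \<Rightarrow> 'r) set) (add_monoid (trunc_series_ring e S'))"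
    proof (rule subgroup.intro)
      fix x y :: "nat list \<Rightarrow> 'r"
      assume "x \<in> trunc_series_vanishing e S' S" "y \<in> trunc_series_vanishing e S' S"
      then show "x \<otimes>\<^bsub>add_monoid (trunc_series_ring e S')\<^esub> y \<in> trunc_series_vanishing e S' S"
        by (simp add: trunc_series_vanishing_def trunc_series_ring_simps)
    next
      fix x :: "nat list \<Rightarrow> 'r" assume "x \<in> trunc_series_vanishing e S' S"
      then show "inv\<^bsub>add_monoid (trunc_series_ring e S')\<^esub> x \<in> trunc_series_vanishing e S' S"
        using trunc_series_ring_uminus[OF S', of x] unfolding a_inv_def[symmetric]
        by (simp add: trunc_series_vanishing_def trunc_series_ring_simps)
    qed (auto simp: trunc_series_vanishing_def trunc_series_ring_simps)
  next
    fix a x :: "nat list \<Rightarrow> 'r"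
    assume "a \<in> trunc_series_vanishing e S' S"
    then have a: "\<forall>i\<in>S. a i = 0" by (simp add: trunc_series_vanishing_def)
    have "idx_conv e x a i = 0" "idx_conv e a x i = 0" if "i \<in> S" for i
      using conv_zero[OF that a, of x] idx_conv_commute[of e a x i] by simp_all
    then show "x \<otimes>\<^bsub>trunc_series_ring e S'\<^esub> a \<in> trunc_series_vanishing e S' S"
      and "a \<otimes>\<^bsub>trunc_series_ring e S'\<^esub> x \<in> trunc_series_vanishing e S' S"
      using assms(3) by (auto simp: trunc_series_vanishing_def trunc_series_ring_simps)
  qed
qed

lemma trunc_series_vanishing_square_zero:
  assumes S': "down_closed_idx e S'"
    and new_sq: "\<And>i j. i \<in> S' - S \<Longrightarrow> j \<in> S' - S \<Longrightarrow> map2 (+) i j \<notin> S'"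
    and x: "\<forall>i\<in>S. x i = 0" and y: "\<forall>i\<in>S. y i = 0"
  shows "x \<otimes>\<^bsub>trunc_series_ring e S'\<^esub> y = \<zero>\<^bsub>trunc_series_ring e S'\<^esub>"
proof -
  have "idx_conv e x y i = 0" if i: "i \<in> S'" for i
    unfolding idx_conv_def
  proof (rule sum.neutral, clarify)
    fix j l assume jl: "(j, l) \<in> idx_splits e i"
    then have "j \<in> S'" "l \<in> S'" "map2 (+) j l = i"
      using down_closed_idx_splits[OF S' i] by (auto simp: idx_splits_def)
    then have "x j = 0 \<or> y l = 0" using x y i new_sq[of j l] by blast
    then show "x j * y l = 0" by auto
  qed
  then show ?thesis by (auto simp: trunc_series_ring_simps)
qed

lemma series_const_mult_trunc_series:
  assumes "down_closed_idx e S"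
  shows "series_const e a \<otimes>\<^bsub>trunc_series_ring e S\<^esub> x = (\<lambda>i. if i \<in> S then a * x i else 0)"
  using assms by (auto simp: trunc_series_ring_simps idx_conv_series_const down_closed_idxD(2))

lemma mult_trunc_series_restrict:
  assumes "down_closed_idx e S" "i \<in> S" "S \<subseteq> S'"
  shows "((\<lambda>j. if j \<in> S then u j else 0) \<otimes>\<^bsub>trunc_series_ring e S'\<^esub> (\<lambda>j. if j \<in> S then v j else 0)) i
    = idx_conv e u v i"
  using assms by (auto simp: trunc_series_ring_simps intro: idx_conv_cong_down_closed)

lemma trunc_series_minus_in_vanishing:
  assumes "down_closed_idx e S'"
    and "x \<in> carrier (trunc_series_ring e S' :: (nat list \<Rightarrow> 'r::comm_ring_1) ring)"
    and "y \<in> carrier (trunc_series_ring e S')" and "\<forall>i\<in>S. x i = y i"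
  shows "x \<ominus>\<^bsub>trunc_series_ring e S'\<^esub> y \<in> trunc_series_vanishing e S' S"
  using assms by (simp add: trunc_series_vanishing_def trunc_series_ring_minus trunc_series_ring_simps)

lemma HS_deriv_of_series_hom:
  assumes S: "down_closed_idx e S"
    and one: "g 1 = \<one>\<^bsub>trunc_series_ring e S\<^esub>"
    and add: "\<And>r s. g (r + s) = g r \<oplus>\<^bsub>trunc_series_ring e S\<^esub> g s"
    and mult: "\<And>r s. g (r * s) = g r \<otimes>\<^bsub>trunc_series_ring e S\<^esub> g s"
    and scal: "\<And>c. g (phi c) = series_const e (phi c)"
    and const: "\<And>r. g r (replicate e 0) = r"
  shows "HS_deriv phi e S (\<lambda>i r. g r i)"
  unfolding HS_deriv_def
proof (intro conjI ballI allI impI)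
  fix i r s assume "i \<in> S"
  then show "g (r * s) i = (\<Sum>(j, l)\<in>{(j, l). length j = e \<and> length l = e \<and> map2 (+) j l = i}. g r j * g s l)"
    by (simp add: mult trunc_series_ring_simps idx_conv_def idx_splits_def)
next
  fix i c r assume "i \<in> S"
  then show "g (phi c * r) i = phi c * g r i"
    by (simp add: mult scal trunc_series_ring_simps idx_conv_series_const down_closed_idxD(2)[OF S])
qed (auto simp: const one add trunc_series_ring_simps series_const_def)

lemma formally_smooth_liftE:
  fixes phi :: "'k::field \<Rightarrow> 'r::comm_ring_1" and A :: "(nat list \<Rightarrow> 'r) ring"
  assumes "formally_smooth phi" "cring A"
    and "\<And>c. psi c \<in> carrier A" "psi 1 = \<one>\<^bsub>A\<^esub>"
    and "\<And>c d. psi (c + d) = psi c \<oplus>\<^bsub>A\<^esub> psi d" "\<And>c d. psi (c * d) = psi c \<otimes>\<^bsub>A\<^esub> psi d"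
    and "ideal I A" "\<And>x y. x \<in> I \<Longrightarrow> y \<in> I \<Longrightarrow> x \<otimes>\<^bsub>A\<^esub> y = \<zero>\<^bsub>A\<^esub>"
    and "\<And>r. f r \<in> carrier A" "f 1 \<ominus>\<^bsub>A\<^esub> \<one>\<^bsub>A\<^esub> \<in> I"
    and "\<And>r s. f (r + s) \<ominus>\<^bsub>A\<^esub> (f r \<oplus>\<^bsub>A\<^esub> f s) \<in> I"
    and "\<And>r s. f (r * s) \<ominus>\<^bsub>A\<^esub> (f r \<otimes>\<^bsub>A\<^esub> f s) \<in> I"
    and "\<And>c. f (phi c) \<ominus>\<^bsub>A\<^esub> psi c \<in> I"
  obtains g where "\<And>r. g r \<in> carrier A" "g 1 = \<one>\<^bsub>A\<^esub>"
    "\<And>r s. g (r + s) = g r \<oplus>\<^bsub>A\<^esub> g s" "\<And>r s. g (r * s) = g r \<otimes>\<^bsub>A\<^esub> g s"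
    "\<And>c. g (phi c) = psi c" "\<And>r. g r \<ominus>\<^bsub>A\<^esub> f r \<in> I"
proof -
  have "cring A \<and> (\<forall>c. psi c \<in> carrier A) \<and> psi 1 = \<one>\<^bsub>A\<^esub> \<and>
      (\<forall>c d. psi (c + d) = psi c \<oplus>\<^bsub>A\<^esub> psi d) \<and> (\<forall>c d. psi (c * d) = psi c \<otimes>\<^bsub>A\<^esub> psi d) \<and>
      ideal I A \<and> (\<forall>x\<in>I. \<forall>y\<in>I. x \<otimes>\<^bsub>A\<^esub> y = \<zero>\<^bsub>A\<^esub>) \<and> (\<forall>r. f r \<in> carrier A) \<and>
      f 1 \<ominus>\<^bsub>A\<^esub> \<one>\<^bsub>A\<^esub> \<in> I \<and> (\<forall>r s. f (r + s) \<ominus>\<^bsub>A\<^esub> (f r \<oplus>\<^bsub>A\<^esub> f s) \<in> I) \<and>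
      (\<forall>r s. f (r * s) \<ominus>\<^bsub>A\<^esub> (f r \<otimes>\<^bsub>A\<^esub> f s) \<in> I) \<and> (\<forall>c. f (phi c) \<ominus>\<^bsub>A\<^esub> psi c \<in> I)"
    using assms(2-) by blast
  from assms(1)[unfolded formally_smooth_def, rule_format, OF this] show ?thesis
    using that by blast
qed

lemma HS_deriv_extend_step:
  fixes phi :: "'k::field \<Rightarrow> 'r::comm_ring_1" and E :: "nat list \<Rightarrow> 'r \<Rightarrow> 'r"
  assumes hom: "is_ring_hom_fun phi" and smooth: "formally_smooth phi"
    and S: "down_closed_idx e S" and S': "down_closed_idx e S'" and sub: "S \<subseteq> S'"
    and new_sq: "\<And>i j. i \<in> S' - S \<Longrightarrow> j \<in> S' - S \<Longrightarrow> map2 (+) i j \<notin> S'"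
    and E: "HS_deriv phi e S E"
  shows "\<exists>E'. HS_deriv phi e S' E' \<and> (\<forall>i\<in>S. E' i = E i)"
proof -
  define A where "A = (trunc_series_ring e S' :: (nat list \<Rightarrow> 'r) ring)"
  define I where "I = (trunc_series_vanishing e S' S :: (nat list \<Rightarrow> 'r) set)"
  define psi where "psi c = series_const e (phi c)" for c
  define f where "f r = (\<lambda>i. if i \<in> S then E i r else 0)" for r
  have cring: "cring A" unfolding A_def by (rule cring_trunc_series_ring[OF S'])
  interpret A: cring A by (rule cring)
  have zero: "replicate e 0 \<in> S" "replicate e 0 \<in> S'"
    using S S' by (simp_all add: down_closed_idxD(1))
  have E0: "\<And>r. E (replicate e 0) r = r"
    and E1: "\<And>i. i \<in> S \<Longrightarrow> i \<noteq> replicate e 0 \<Longrightarrow> E i 1 = 0"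
    and Eadd: "\<And>i r s. i \<in> S \<Longrightarrow> E i (r + s) = E i r + E i s"
    and Ephi: "\<And>i c r. i \<in> S \<Longrightarrow> E i (phi c * r) = phi c * E i r"
    and Emult: "\<And>i r s. i \<in> S \<Longrightarrow> E i (r * s) = idx_conv e (\<lambda>j. E j r) (\<lambda>l. E l s) i"
    using HS_derivD[OF E] by (simp_all add: idx_conv_def)
  have phi1: "phi 1 = 1" and phi_add: "\<And>c d. phi (c + d) = phi c + phi d"
    and phi_mult: "\<And>c d. phi (c * d) = phi c * phi d"
    using hom unfolding is_ring_hom_fun_def by auto
  have f_carrier: "\<And>r. f r \<in> carrier A" and psi_carrier: "\<And>c. psi c \<in> carrier A"
    using sub zero by (auto simp: f_def psi_def series_const_def A_def trunc_series_ring_simps)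
  have mod_I: "x \<ominus>\<^bsub>A\<^esub> y \<in> I" if "x \<in> carrier A" "y \<in> carrier A" "\<forall>i\<in>S. x i = y i" for x y
    using trunc_series_minus_in_vanishing[OF S'] that unfolding I_def A_def by blast
  obtain g where g_one: "g 1 = \<one>\<^bsub>A\<^esub>"
    and g_add: "\<And>r s. g (r + s) = g r \<oplus>\<^bsub>A\<^esub> g s" and g_mult: "\<And>r s. g (r * s) = g r \<otimes>\<^bsub>A\<^esub> g s"
    and g_phi: "\<And>c. g (phi c) = psi c" and g_lift: "\<And>r. g r \<ominus>\<^bsub>A\<^esub> f r \<in> I" and g_carrier: "\<And>r. g r \<in> carrier A"
  proof (rule formally_smooth_liftE[OF smooth cring psi_carrier, where I=I and f=f])
    show "psi 1 = \<one>\<^bsub>A\<^esub>" "\<And>c d. psi (c + d) = psi c \<oplus>\<^bsub>A\<^esub> psi d"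
      by (auto simp: psi_def A_def trunc_series_ring_simps series_const_def phi1 phi_add)
    show "psi (c * d) = psi c \<otimes>\<^bsub>A\<^esub> psi d" for c d
      unfolding psi_def A_def series_const_mult_trunc_series[OF S']
      using zero by (auto simp: series_const_def phi_mult)
    show "ideal I A"
      unfolding I_def A_def by (rule ideal_trunc_series_vanishing[OF S' S sub])
    show "x \<otimes>\<^bsub>A\<^esub> y = \<zero>\<^bsub>A\<^esub>" if "x \<in> I" "y \<in> I" for x y
      using that unfolding I_def A_def trunc_series_vanishing_def
      by (intro trunc_series_vanishing_square_zero[OF S' new_sq]) auto
    show "f 1 \<ominus>\<^bsub>A\<^esub> \<one>\<^bsub>A\<^esub> \<in> I"
      by (intro mod_I f_carrier A.one_closed) (auto simp: f_def A_def trunc_series_ring_simps series_const_def E0 E1)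
    show "f (r + s) \<ominus>\<^bsub>A\<^esub> (f r \<oplus>\<^bsub>A\<^esub> f s) \<in> I" for r s
      by (intro mod_I f_carrier A.a_closed) (auto simp: f_def A_def trunc_series_ring_simps Eadd)
    show "f (r * s) \<ominus>\<^bsub>A\<^esub> (f r \<otimes>\<^bsub>A\<^esub> f s) \<in> I" for r s
      by (intro mod_I f_carrier A.m_closed)
        (simp add: f_def A_def mult_trunc_series_restrict[OF S _ sub] Emult)
    show "f (phi c) \<ominus>\<^bsub>A\<^esub> psi c \<in> I" for c
    proof (intro mod_I f_carrier psi_carrier ballI)
      fix i assume i: "i \<in> S"
      have "E i (phi c) = phi c * E i 1" using Ephi[OF i, of c 1] by simp
      then show "f (phi c) i = psi c i"
        using i by (cases "i = replicate e 0") (auto simp: f_def psi_def series_const_def E0 E1)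
    qed
  qed (use f_carrier in auto)
  have g_restrict: "g r i = E i r" if "i \<in> S" for r i
    using g_lift[of r] that trunc_series_ring_minus[OF S' g_carrier[unfolded A_def] f_carrier[unfolded A_def]]
    unfolding I_def A_def trunc_series_vanishing_def by (simp add: f_def)
  have "HS_deriv phi e S' (\<lambda>i r. g r i)"
    by (rule HS_deriv_of_series_hom[OF S'])
      (use g_one g_add g_mult g_phi g_restrict E0 zero in \<open>simp_all add: A_def psi_def\<close>)
  with g_restrict show ?thesis by blast
qed

lemma sum_list_le_of_nth_le:
  "length j = length i \<Longrightarrow> (\<forall>t<length i. j ! t \<le> i ! t) \<Longrightarrow> sum_list j \<le> sum_list (i :: nat list)"
  by (auto simp: sum_list_sum_nth intro!: sum_mono)

definition idx_filtration :: "nat \<Rightarrow> nat list set \<Rightarrow> nat \<Rightarrow> nat list set" where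
  "idx_filtration e S n = S \<union> {i. length i = e \<and> sum_list i \<le> n}"

lemma down_closed_idx_filtration:
  assumes "down_closed_idx e S"
  shows "down_closed_idx e (idx_filtration e S n)"
  unfolding down_closed_idx_def
proof (intro conjI ballI allI impI)
  fix i j assume i: "i \<in> idx_filtration e S n" and j: "length j = e \<and> (\<forall>t<e. j ! t \<le> i ! t)"
  show "j \<in> idx_filtration e S n"
  proof (cases "i \<in> S")
    case True
    with assms j show ?thesis by (auto simp: idx_filtration_def down_closed_idx_def)
  next
    case False
    with i j have "sum_list j \<le> n" using sum_list_le_of_nth_le[of j i]
      by (auto simp: idx_filtration_def)
    with j show ?thesis by (simp add: idx_filtration_def)
  qed
qed (use assms in \<open>auto simp: idx_filtration_def down_closed_idx_def full_idx_def\<close>)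

lemma idx_filtration_0:
  assumes "down_closed_idx e S"
  shows "idx_filtration e S 0 = S"
proof -
  have "i = replicate e 0" if "length i = e" "sum_list i = 0" for i :: "nat list"
    using that by (auto intro!: nth_equalityI)
  with assms show ?thesis by (auto simp: idx_filtration_def down_closed_idx_def)
qed

lemma idx_filtration_mono: "idx_filtration e S n \<subseteq> idx_filtration e S (Suc n)"
  by (auto simp: idx_filtration_def)

text \<open>Two indices of degree n + 1 outside S add up to degree 2n + 2; their sum is not in S
either, since S is downward closed.\<close>
lemma idx_filtration_Suc_sum_notin:
  assumes S: "down_closed_idx e S"
    and i: "i \<in> idx_filtration e S (Suc n) - idx_filtration e S n"
    and j: "j \<in> idx_filtration e S (Suc n) - idx_filtration e S n"
  shows "map2 (+) i j \<notin> idx_filtration e S (Suc n)"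
proof
  assume ij: "map2 (+) i j \<in> idx_filtration e S (Suc n)"
  have deg: "length i = e" "length j = e" "sum_list i = Suc n" "sum_list j = Suc n" "i \<notin> S"
    using i j by (auto simp: idx_filtration_def)
  then have "sum_list (map2 (+) i j) = 2 * Suc n" by (simp add: sum_list_map2_plus)
  with ij have "map2 (+) i j \<in> S" by (auto simp: idx_filtration_def)
  with S deg have "i \<in> S" unfolding down_closed_idx_def by auto
  with deg show False by simp
qed

lemma HS_deriv_chain_stable:
  assumes mono: "\<And>n. L n \<subseteq> L (Suc n)"
    and stable: "\<And>n i. i \<in> L n \<Longrightarrow> F (Suc n) i = F n i"
    and "i \<in> L n" "n \<le> k"
  shows "F k i = F n i"
  using assms(4)
proof (induction k rule: dec_induct)
  case (step k)
  have "i \<in> L k" using \<open>i \<in> L n\<close> lift_Suc_mono_le[of L, OF mono step.hyps(1)] by blast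
  with step.IH show ?case by (simp add: stable)
qed simp

text \<open>The index i is read off at level |i|, which already contains every j \<le> i.\<close>
lemma HS_deriv_chain_limit:
  assumes HS: "\<And>n. HS_deriv phi e (L n) (F n)"
    and mono: "\<And>n. L n \<subseteq> L (Suc n)"
    and stable: "\<And>n i. i \<in> L n \<Longrightarrow> F (Suc n) i = F n i"
    and exhaust: "\<And>i. length i = e \<Longrightarrow> i \<in> L (sum_list i)"
  shows "HS_deriv phi e (full_idx e) (\<lambda>i. F (sum_list i) i)"
  unfolding HS_deriv_def
proof (intro conjI ballI allI impI)
  fix r show "F (sum_list (replicate e 0)) (replicate e 0) r = r"
    using HS_derivD(1)[OF HS] by (simp add: sum_list_replicate)
next
  fix i r s assume "i \<in> full_idx e"
  then have i: "i \<in> L (sum_list i)" using exhaust by (simp add: full_idx_def)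
  let ?D = "F (sum_list i)"
  show "i \<noteq> replicate e 0 \<Longrightarrow> ?D i 1 = 0" "?D i (r + s) = ?D i r + ?D i s"
    "\<And>c. ?D i (phi c * r) = phi c * ?D i r"
    using HS_derivD(2-4)[OF HS i] by simp_all
  have "?D i (r * s) = (\<Sum>(j, l)\<in>idx_splits e i. ?D j r * ?D l s)"
    by (rule HS_derivD(5)[OF HS i])
  also have "\<dots> = (\<Sum>(j, l)\<in>idx_splits e i. F (sum_list j) j r * F (sum_list l) l s)"
  proof (intro sum.cong refl, clarify)
    fix j l assume "(j, l) \<in> idx_splits e i"
    then have "length j = e" "length l = e" "sum_list i = sum_list j + sum_list l"
      by (auto simp: idx_splits_def sum_list_map2_plus)
    then have "?D j = F (sum_list j) j" "?D l = F (sum_list l) l"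
      by (auto intro: HS_deriv_chain_stable[where L=L and F=F, OF mono stable exhaust])
    then show "?D j r * ?D l s = F (sum_list j) j r * F (sum_list l) l s" by simp
  qed
  finally show "F (sum_list i) i (r * s)
      = (\<Sum>(j, l)\<in>{(j, l). length j = e \<and> length l = e \<and> map2 (+) j l = i}.
           F (sum_list j) j r * F (sum_list l) l s)"
    by (simp add: idx_splits_def)
qed

theorem HS_deriv_extend:
  fixes phi :: "'k::field \<Rightarrow> 'r::comm_ring_1"
  assumes hom: "is_ring_hom_fun phi" and smooth: "formally_smooth phi"
    and S: "down_closed_idx e S" and D: "HS_deriv phi e S D"
  shows "\<exists>D'. HS_deriv phi e (full_idx e) D' \<and> (\<forall>i\<in>S. D' i = D i)"
proof -
  let ?L = "idx_filtration e S"
  have "\<forall>n E. \<exists>E'. HS_deriv phi e (?L n) E \<longrightarrow> HS_deriv phi e (?L (Suc n)) E' \<and> (\<forall>i\<in>?L n. E' i = E i)"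
    using HS_deriv_extend_step[OF hom smooth down_closed_idx_filtration[OF S] down_closed_idx_filtration[OF S]
        idx_filtration_mono idx_filtration_Suc_sum_notin[OF S]] by blast
  then obtain ext where ext: "\<And>n E. HS_deriv phi e (?L n) E \<Longrightarrow>
      HS_deriv phi e (?L (Suc n)) (ext n E) \<and> (\<forall>i\<in>?L n. ext n E i = E i)"
    by metis
  define F where "F = rec_nat D ext"
  have HS: "HS_deriv phi e (?L n) (F n)" for n
    by (induction n) (simp_all add: F_def D idx_filtration_0[OF S] ext)
  have stable: "F (Suc n) i = F n i" if "i \<in> ?L n" for n i
    using ext[OF HS[of n]] that by (simp add: F_def)
  have exhaust: "i \<in> ?L (sum_list i)" if "length i = e" for i
    using that by (simp add: idx_filtration_def)
  have agree: "F (sum_list i) i = D i" if "i \<in> S" for i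
    using HS_deriv_chain_stable[where L="?L" and F=F, OF idx_filtration_mono stable, of i 0 "sum_list i"] that
    by (simp add: idx_filtration_0[OF S] F_def)
  show ?thesis
    by (intro exI[of _ "\<lambda>i. F (sum_list i) i"] conjI ballI agree
        HS_deriv_chain_limit[where L="?L" and F=F, OF HS idx_filtration_mono stable exhaust])
qed

theorem theorem2p3:
  fixes phi :: "'k::field \<Rightarrow> 'r::comm_ring_1"
    and p e m :: nat
    and D :: "nat list \<Rightarrow> 'r \<Rightarrow> 'r"
  assumes "CHAR('k) = p" and "p > 0"
    and "smooth_algebra phi"
    and "e > 0" and "m > 0"
    and "HS_deriv phi e (trunc_idx e (p ^ m)) D"
  shows "\<exists>D' :: nat list \<Rightarrow> 'r \<Rightarrow> 'r.
           HS_deriv phi e (full_idx e) D' \<and> (\<forall>i\<in>trunc_idx e (p ^ m). D' i = D i)"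
proof (rule HS_deriv_extend)
  show "is_ring_hom_fun phi" "formally_smooth phi"
    using \<open>smooth_algebra phi\<close> unfolding smooth_algebra_def by auto
  show "down_closed_idx e (trunc_idx e (p ^ m))"
    using \<open>p > 0\<close> by (simp add: down_closed_trunc_idx)
qed fact

end
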